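(* Let $q>0$ and $\ell\in\{0,1,2,\ldots\}$. Then $$\tilde\gamma_\ell(q)=\lim_{\alpha\to\infty}\sum_{n=0}^{\alpha}(-1)^n\frac{\log^\ell(n+q)}{n+q},$$ where $\alpha$ runs through the nonnegative integers.
   Context: For $q>0$, $\zeta_E(z,q)=\sum_{n=0}^\infty (-1)^n (n+q)^{-z}$ for $\mathrm{Re}(z)>0$, extended by analytic continuation to an entire function of $z$. The modified Stieltjes constants $\tilde\gamma_k(q)$ are defined by the Taylor expansion $\zeta_E(z,q)=\sum_{k=0}^\infty\frac{(-1)^k\tilde\gamma_k(q)}{k!}(z-1)^k$. Convention: $\log^0 x=1$. *)

theory Defs
  imports "HOL-Complex_Analysis.Complex_Analysis"
begin

text \<open>The alternating Hurwitz zeta function zeta_E(z,q): the entire function of z that agrees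
  with the series sum_n (-1)^n (n+q)^(-z) on the half-plane Re z > 0.
  (By the identity theorem such a function is unique when it exists.)\<close>
definition zetaE :: "complex \<Rightarrow> real \<Rightarrow> complex" where
  "zetaE z q = (THE f. f holomorphic_on UNIV \<and>
      (\<forall>w. 0 < Re w \<longrightarrow> f w = (\<Sum>n. (-1) ^ n * (complex_of_real (real n + q)) powr (- w)))) z"

text \<open>Modified Stieltjes constants: zeta_E(z,q) = sum_k (-1)^k g_k(q)/k! (z-1)^k, i.e.
  the k-th Taylor coefficient at z = 1 equals (-1)^k g_k(q) / k!, so
  g_k(q) = (-1)^k * (k-th derivative of zeta_E(.,q) at 1).\<close>
definition tilde_gamma :: "nat \<Rightarrow> real \<Rightarrow> complex" where
  "tilde_gamma k q = (-1) ^ k * (deriv ^^ k) (\<lambda>z. zetaE z q) 1"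

end

theory Submission
  imports Defs
begin

text \<open>For \<open>Re z > 0\<close> the series \<open>\<Sum>n. (-1)^n (n+q) powr -z\<close> can be rewritten by the
  Euler transformation \<open>\<Sum>n. (-1)^n a n = a 0 / 2 + (\<Sum>n. (-1)^n (a n - a (n+1))) / 2\<close>.
  After \<open>K\<close> such steps the terms are \<open>K\<close>-th differences of \<open>t powr -z\<close>, which are
  \<open>O(t powr (-Re z - K))\<close> by the mean value theorem, so the transformed series converges locally
  uniformly on \<open>Re z > 1 - K\<close>; gluing these yields the entire function \<open>zetaE\<close>.
  After one step the partial sums of the original series converge uniformly near \<open>z = 1\<close>,
  so by Weierstrass' theorem their \<open>l\<close>-th derivatives at \<open>1\<close>, which are \<open>(-1)^l\<close> times
  the sums in the theorem, converge to the \<open>l\<close>-th derivative of \<open>zetaE\<close> at \<open>1\<close>.\<close>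

text \<open>\<open>shift_diff K f = (I - S)^K f\<close> for the shift \<open>S f t = f (t + 1)\<close>, i.e. \<open>(-1)^K\<close> times
  the \<open>K\<close>-th forward difference.\<close>

fun shift_diff :: "nat \<Rightarrow> (real \<Rightarrow> 'a::ab_group_add) \<Rightarrow> real \<Rightarrow> 'a" where
  "shift_diff 0 f = f"
| "shift_diff (Suc K) f = shift_diff K (\<lambda>t. f t - f (t + 1))"

lemma shift_diff_Suc': "shift_diff (Suc K) f x = shift_diff K f x - shift_diff K f (x + 1)"
proof (induction K arbitrary: f x)
  case (Suc K)
  show ?case using Suc.IH[of "\<lambda>t. f t - f (t + 1)"] Suc.IH[of f] by simp
qed simp

lemma holomorphic_on_shift_diff:
  assumes "\<And>t. (\<lambda>z. h t z) holomorphic_on S"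
  shows "(\<lambda>z. shift_diff K (\<lambda>t. h t z) x) holomorphic_on S"
  using assms
proof (induction K arbitrary: h)
  case (Suc K)
  have "(\<lambda>z. shift_diff K (\<lambda>t. h t z - h (t + 1) z) x) holomorphic_on S"
    by (rule Suc.IH) (intro holomorphic_intros Suc.prems)
  then show ?case by simp
qed simp

lemma norm_shift_diff_le:
  fixes fs :: "nat \<Rightarrow> real \<Rightarrow> 'a::real_normed_vector"
  assumes "\<And>j t. x \<le> t \<Longrightarrow> (fs j has_vector_derivative fs (Suc j) t) (at t)"
    and "\<And>t. x \<le> t \<Longrightarrow> t \<le> x + real K \<Longrightarrow> norm (fs K t) \<le> B"
  shows "norm (shift_diff K (fs 0) x) \<le> B"
  using assms
proof (induction K arbitrary: fs)
  case (Suc K)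
  define gs where "gs j = (\<lambda>t. fs j t - fs j (t + 1))" for j
  have "(gs j has_vector_derivative gs (Suc j) t) (at t)" if "x \<le> t" for j t
  proof -
    have "((\<lambda>t. t + 1) has_vector_derivative 1) (at t)"
      by (auto intro!: derivative_eq_intros)
    from vector_diff_chain_at[OF this Suc.prems(1)[of "t + 1" j]]
    have "((\<lambda>t. fs j (t + 1)) has_vector_derivative fs (Suc j) (t + 1)) (at t)"
      using that by (simp add: o_def)
    then show ?thesis
      unfolding gs_def by (intro has_vector_derivative_diff Suc.prems(1) that)
  qed
  moreover have "norm (gs K t) \<le> B" if "x \<le> t" "t \<le> x + real K" for t
  proof -
    have "norm (fs K (t + 1) - fs K t) \<le> B * norm (t + 1 - t)"
    proof (rule differentiable_bound[of "{t..t + 1}"])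
      fix s assume s: "s \<in> {t..t + 1}"
      then show "(fs K has_derivative (\<lambda>h. h *\<^sub>R fs (Suc K) s)) (at s within {t..t + 1})"
        using Suc.prems(1)[of s K] \<open>x \<le> t\<close>
        by (auto simp: has_vector_derivative_def intro: has_derivative_at_withinI)
      show "onorm (\<lambda>h. h *\<^sub>R fs (Suc K) s) \<le> B"
        using Suc.prems(2)[of s] s that
        by (simp add: onorm_scaleR_left[OF bounded_linear_ident] onorm_id)
    qed auto
    then show ?thesis
      unfolding gs_def by (simp add: norm_minus_commute)
  qed
  ultimately have "norm (shift_diff K (gs 0) x) \<le> B"
    by (rule Suc.IH)
  then show ?case by (simp add: gs_def)
qed simp

declare shift_diff.simps(2) [simp del]

lemma norm_pochhammer_le:
  fixes z :: "'a::real_normed_field"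
  assumes "norm z \<le> R"
  shows "norm (pochhammer z n) \<le> pochhammer R n"
  unfolding pochhammer_prod prod_norm[symmetric]
proof (rule prod_mono)
  fix i
  have "norm (z + of_nat i) \<le> norm z + real i"
    using norm_triangle_ineq[of z "of_nat i"] by simp
  then show "0 \<le> norm (z + of_nat i) \<and> norm (z + of_nat i) \<le> R + of_nat i"
    using assms by simp
qed

abbreviation diff_powr :: "nat \<Rightarrow> complex \<Rightarrow> real \<Rightarrow> complex" where
  "diff_powr K z \<equiv> shift_diff K (\<lambda>t. of_real t powr - z)"

lemma norm_diff_powr_le:
  assumes "0 < x" "0 \<le> Re z + real K" "norm z \<le> R"
  shows "norm (diff_powr K z x) \<le> pochhammer R K * x powr (- Re z - real K)"
proof -
  define fs where "fs j t = (-1)^j * pochhammer z j * of_real t powr (- z - of_nat j)" for j t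
  have "(fs j has_vector_derivative fs (Suc j) t) (at t)" if "x \<le> t" for j t
  proof -
    have "0 < t" using that assms(1) by simp
    then have "((\<lambda>w. w powr (- z - of_nat j)) has_field_derivative
        (- z - of_nat j) * of_real t powr (- z - of_nat j - 1)) (at (of_real t))"
      by (intro has_field_derivative_powr) simp
    from has_vector_derivative_real_field[OF DERIV_cmult[OF this, of "(-1)^j * pochhammer z j"]]
    show ?thesis
      unfolding fs_def by (simp add: pochhammer_Suc algebra_simps)
  qed
  moreover have "norm (fs K t) \<le> pochhammer R K * x powr (- Re z - real K)" if "x \<le> t" for t
  proof -
    have "norm (fs K t) = norm (pochhammer z K) * t powr (- Re z - real K)"
      using that assms(1) by (simp add: fs_def norm_mult norm_power norm_powr_real_powr)
    also have "\<dots> \<le> pochhammer R K * x powr (- Re z - real K)"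
      using assms that order_trans[OF norm_ge_zero norm_pochhammer_le[OF assms(3)]]
      by (intro mult_mono norm_pochhammer_le powr_mono2') auto
    finally show ?thesis .
  qed
  ultimately have "norm (shift_diff K (fs 0) x) \<le> pochhammer R K * x powr (- Re z - real K)"
    by (rule norm_shift_diff_le)
  moreover have "fs 0 = (\<lambda>t. of_real t powr - z)"
    by (simp add: fun_eq_iff fs_def)
  ultimately show ?thesis by simp
qed

lemma eventually_norm_diff_powr_le:
  assumes "0 < q" "0 \<le> s" "\<And>z. z \<in> A \<Longrightarrow> s \<le> Re z + real K \<and> norm z \<le> R"
  shows "\<forall>\<^sub>F n in sequentially. \<forall>z\<in>A.
           norm (diff_powr K z (real n + q)) \<le> pochhammer R K * (real n + q) powr - s"
  using eventually_ge_at_top[of 1]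
proof eventually_elim
  case (elim n)
  show ?case
  proof
    fix z assume "z \<in> A"
    then have z: "s \<le> Re z + real K" "norm z \<le> R"
      using assms(3) by auto
    have "norm (diff_powr K z (real n + q))
        \<le> pochhammer R K * (real n + q) powr (- Re z - real K)"
      using assms(1,2) z by (intro norm_diff_powr_le) auto
    also have "\<dots> \<le> pochhammer R K * (real n + q) powr - s"
      using assms(1) elim z order_trans[OF norm_ge_zero norm_pochhammer_le[OF z(2)]]
      by (intro mult_left_mono powr_mono) auto
    finally show "norm (diff_powr K z (real n + q))
        \<le> pochhammer R K * (real n + q) powr - s" .
  qed
qed

lemma summable_shifted_powr:
  assumes "1 < s" "0 < q"
  shows "summable (\<lambda>n. (real n + q) powr - s)"
proof (rule summable_comparison_test_ev)
  show "summable (\<lambda>n. real n powr - s)"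
    using assms by (simp add: summable_real_powr_iff)
  show "\<forall>\<^sub>F n in sequentially. norm ((real n + q) powr - s) \<le> real n powr - s"
    using eventually_gt_at_top[of "0::nat"]
    by eventually_elim (use assms in \<open>auto intro!: powr_mono2'\<close>)
qed

lemma shifted_powr_tendsto_0:
  assumes "0 < s"
  shows "(\<lambda>n. (real n + q) powr - s) \<longlonglongrightarrow> 0"
proof (rule tendsto_neg_powr)
  show "- s < 0" using assms by simp
  show "filterlim (\<lambda>n. real n + q) at_top sequentially"
    using filterlim_tendsto_add_at_top[OF tendsto_const filterlim_real_sequentially, of q]
    by (simp add: add.commute)
qed

lemma diff_powr_tendsto_0:
  assumes "0 < q" "0 < Re z + real K"
  shows "(\<lambda>n. diff_powr K z (real n + q)) \<longlonglongrightarrow> 0"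
proof (rule Lim_null_comparison)
  show "\<forall>\<^sub>F n in sequentially. norm (diff_powr K z (real n + q))
      \<le> pochhammer (norm z) K * (real n + q) powr - (Re z + real K)"
    using eventually_norm_diff_powr_le[of q "Re z + real K" "{z}"] assms by simp
  show "(\<lambda>n. pochhammer (norm z) K * (real n + q) powr - (Re z + real K)) \<longlonglongrightarrow> 0"
    using assms(2) by (intro tendsto_mult_right_zero shifted_powr_tendsto_0)
qed

lemma uniform_limit_diff_powr_series:
  assumes "0 < q" "1 < s" "\<And>z. z \<in> A \<Longrightarrow> s \<le> Re z + real K \<and> norm z \<le> R"
  shows "uniform_limit A
           (\<lambda>N z. \<Sum>n<N. (-1)^n * diff_powr K z (real n + q))
           (\<lambda>z. \<Sum>n. (-1)^n * diff_powr K z (real n + q)) sequentially"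
proof (rule Weierstrass_m_test_ev)
  show "summable (\<lambda>n. pochhammer R K * (real n + q) powr - s)"
    using assms(1,2) by (intro summable_mult summable_shifted_powr)
  show "\<forall>\<^sub>F n in sequentially. \<forall>z\<in>A. norm ((-1)^n * diff_powr K z (real n + q))
      \<le> pochhammer R K * (real n + q) powr - s"
    using eventually_norm_diff_powr_le[OF assms(1) _ assms(3)] assms(2)
    by (simp add: norm_mult norm_power)
qed

lemma summable_diff_powr:
  assumes "0 < q" "1 < Re z + real K"
  shows "summable (\<lambda>n. (-1)^n * diff_powr K z (real n + q))"
  using uniform_limit_diff_powr_series[of q "Re z + real K" "{z}" K "norm z"] assms
  by (simp add: sums_def[symmetric] sums_iff)

lemma sum_alternating_euler_step:
  fixes g :: "nat \<Rightarrow> 'a::field_char_0"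
  shows "(\<Sum>n<N. (-1)^n * g n) = g 0 / 2 + (\<Sum>n<N. (-1)^n * (g n - g (Suc n))) / 2 - (-1)^N * g N / 2"
proof -
  have double: "2 * (\<Sum>n<N. (-1)^n * g n) = g 0 + (\<Sum>n<N. (-1)^n * (g n - g (Suc n))) - (-1)^N * g N"
    by (induction N) (simp_all add: algebra_simps)
  show ?thesis
    unfolding add_divide_distrib[symmetric] diff_divide_distrib[symmetric] double[symmetric] by simp
qed

lemma sums_alternating_euler_step:
  fixes g :: "nat \<Rightarrow> 'a::real_normed_field"
  assumes "g \<longlonglongrightarrow> 0" "summable (\<lambda>n. (-1)^n * (g n - g (Suc n)))"
  shows "(\<lambda>n. (-1)^n * g n) sums (g 0 / 2 + (\<Sum>n. (-1)^n * (g n - g (Suc n))) / 2)"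
proof -
  have "(\<lambda>N. norm ((-1)^N * g N / 2)) \<longlonglongrightarrow> 0"
    using tendsto_divide_zero[OF tendsto_norm_zero[OF assms(1)], of 2]
    by (simp add: norm_mult norm_power norm_divide)
  then have "(\<lambda>N. (-1)^N * g N / 2) \<longlonglongrightarrow> 0"
    by (rule tendsto_norm_zero_cancel)
  then have "(\<lambda>N. g 0 / 2 + (\<Sum>n<N. (-1)^n * (g n - g (Suc n))) / 2 - (-1)^N * g N / 2)
      \<longlonglongrightarrow> g 0 / 2 + (\<Sum>n. (-1)^n * (g n - g (Suc n))) / 2 - 0"
    using assms(2) by (intro tendsto_intros) (simp_all add: summable_LIMSEQ)
  then show ?thesis
    unfolding sums_def sum_alternating_euler_step[where g=g] by simp
qed

lemma sums_diff_powr: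
  assumes "0 < q" "- real K < Re z"
  shows "(\<lambda>n. (-1)^n * diff_powr K z (real n + q)) sums
           (diff_powr K z q / 2 +
            (\<Sum>n. (-1)^n * diff_powr (Suc K) z (real n + q)) / 2)"
proof -
  define g where "g n = diff_powr K z (real n + q)" for n
  have "g n - g (Suc n) = diff_powr (Suc K) z (real n + q)" for n
    unfolding g_def shift_diff_Suc' by (simp add: add_ac)
  moreover have "g \<longlonglongrightarrow> 0"
    unfolding g_def using assms by (intro diff_powr_tendsto_0) auto
  moreover have "summable (\<lambda>n. (-1)^n * diff_powr (Suc K) z (real n + q))"
    using assms by (intro summable_diff_powr) auto
  ultimately show ?thesis
    using sums_alternating_euler_step[of g] by (simp add: g_def)
qed

text \<open>The \<open>K\<close>-fold Euler transform of the series defining \<open>zetaE\<close>; it converges for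
  \<open>Re z > 1 - K\<close>.\<close>

definition zetaE_euler :: "nat \<Rightarrow> complex \<Rightarrow> real \<Rightarrow> complex" where
  "zetaE_euler K z q =
     (\<Sum>j<K. diff_powr j z q / 2 ^ Suc j) +
     (\<Sum>n. (-1)^n * diff_powr K z (real n + q)) / 2 ^ K"

lemma sums_zetaE_euler_1:
  assumes "0 < q" "0 < Re z"
  shows "(\<lambda>n. (-1)^n * of_real (real n + q) powr - z) sums zetaE_euler 1 z q"
  using sums_diff_powr[of q 0 z] assms by (simp add: zetaE_euler_def)

lemma zetaE_euler_Suc:
  assumes "0 < q" "1 - real K < Re z"
  shows "zetaE_euler (Suc K) z q = zetaE_euler K z q"
proof -
  have step: "(\<Sum>n. (-1)^n * diff_powr K z (real n + q)) =
      diff_powr K z q / 2 +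
      (\<Sum>n. (-1)^n * diff_powr (Suc K) z (real n + q)) / 2"
    using assms by (intro sums_unique[symmetric] sums_diff_powr) auto
  show ?thesis
    unfolding zetaE_euler_def step by (simp add: field_simps)
qed

lemma zetaE_euler_eq:
  assumes "0 < q" "1 - real K < Re z" "1 - real M < Re z"
  shows "zetaE_euler K z q = zetaE_euler M z q"
proof -
  have "zetaE_euler K z q = zetaE_euler M z q" if "K \<le> M" "1 - real K < Re z" for K M
    using that(1)
  proof (induction M rule: dec_induct)
    case (step m)
    then show ?case
      using zetaE_euler_Suc[OF assms(1), of m z] that(2) by simp
  qed simp
  then show ?thesis
    using assms(2,3) by (metis nat_le_linear)
qed

lemma holomorphic_zetaE_euler:
  assumes "0 < q"
  shows "(\<lambda>z. zetaE_euler K z q) holomorphic_on {z. 1 - real K < Re z}"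
proof -
  define H where "H = {z. 1 - real K < Re z}"
  have "open H"
    unfolding H_def by (rule open_halfspace_Re_gt)
  have "(\<lambda>z. \<Sum>n. (-1)^n * diff_powr K z (real n + q)) holomorphic_on H"
  proof (rule holomorphic_uniform_sequence[OF \<open>open H\<close>])
    show "(\<lambda>z. \<Sum>n<N. (-1)^n * diff_powr K z (real n + q)) holomorphic_on H" for N
      by (intro holomorphic_intros holomorphic_on_shift_diff)
    fix x assume "x \<in> H"
    define d where "d = (Re x - (1 - real K)) / 2"
    have "0 < d"
      using \<open>x \<in> H\<close> by (simp add: H_def d_def)
    have bound: "1 + d \<le> Re y + real K \<and> norm y \<le> norm x + d" if "y \<in> cball x d" for y
    proof -
      have "norm (x - y) \<le> d"
        using that by (simp add: dist_norm)
      moreover have "Re x - Re y \<le> norm (x - y)" "norm y - norm x \<le> norm (x - y)"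
        using complex_Re_le_cmod[of "x - y"] norm_triangle_ineq2[of y x]
        by (simp_all add: norm_minus_commute)
      ultimately show ?thesis
        unfolding d_def by (intro conjI) argo+
    qed
    then have "cball x d \<subseteq> H"
      using \<open>0 < d\<close> by (force simp: H_def)
    moreover have "uniform_limit (cball x d)
        (\<lambda>N z. \<Sum>n<N. (-1)^n * diff_powr K z (real n + q))
        (\<lambda>z. \<Sum>n. (-1)^n * diff_powr K z (real n + q)) sequentially"
      using \<open>0 < d\<close> by (intro uniform_limit_diff_powr_series[OF assms _ bound]) auto
    ultimately show "\<exists>d>0. cball x d \<subseteq> H \<and> uniform_limit (cball x d)
        (\<lambda>N z. \<Sum>n<N. (-1)^n * diff_powr K z (real n + q))
        (\<lambda>z. \<Sum>n. (-1)^n * diff_powr K z (real n + q)) sequentially"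
      using \<open>0 < d\<close> by blast
  qed
  then show ?thesis
    unfolding zetaE_euler_def H_def[symmetric]
    by (intro holomorphic_intros holomorphic_on_shift_diff) auto
qed

lemma zetaE_eqI:
  assumes "f holomorphic_on UNIV"
    and "\<And>w. 0 < Re w \<Longrightarrow> f w = (\<Sum>n. (-1)^n * of_real (real n + q) powr - w)"
  shows "(\<lambda>z. zetaE z q) = f"
proof -
  let ?P = "\<lambda>f. f holomorphic_on UNIV \<and>
      (\<forall>w. 0 < Re w \<longrightarrow> f w = (\<Sum>n. (-1) ^ n * (complex_of_real (real n + q)) powr (- w)))"
  have "g = f" if "?P g" for g
  proof
    fix z
    show "g z = f z"
    proof (rule analytic_continuation_open
        [where s = "{w. 0 < Re w}" and s' = UNIV and f = g and g = f])
      show "{w. 0 < Re w} \<noteq> {}"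
        by (auto intro!: exI[of _ 1])
    qed (use that assms open_halfspace_Re_gt[of 0] in auto)
  qed
  then have "(THE f. ?P f) = f"
    using assms by (intro the_equality) auto
  then show ?thesis
    unfolding zetaE_def by simp
qed

lemma zetaE_eq_zetaE_euler:
  assumes "0 < q" "1 - real K < Re z"
  shows "zetaE z q = zetaE_euler K z q"
proof -
  define F where "F z = zetaE_euler (nat \<lceil>2 - Re z\<rceil>) z q" for z
  have F_eq: "F z = zetaE_euler K z q" if "1 - real K < Re z" for K z
    unfolding F_def using that by (intro zetaE_euler_eq[OF assms(1)]) linarith+
  have "F holomorphic_on (\<Union>K\<in>UNIV. {z. 1 - real K < Re z})"
  proof (rule holomorphic_on_UN_open[where A = "\<lambda>K. {z. 1 - real K < Re z}"])
    show "F holomorphic_on {z. 1 - real K < Re z}" for K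
    proof (rule holomorphic_transform[OF holomorphic_zetaE_euler[OF assms(1), of K]])
      show "zetaE_euler K z q = F z" if "z \<in> {z. 1 - real K < Re z}" for z
        using F_eq[of K z] that by simp
    qed
  qed (rule open_halfspace_Re_gt)
  moreover have "(\<Union>K. {z. 1 - real K < Re z}) = UNIV"
  proof -
    have "\<exists>K. 1 - real K < Re z" for z
      using reals_Archimedean2[of "1 - Re z"] by (auto simp: algebra_simps)
    then show ?thesis by auto
  qed
  moreover have "F w = (\<Sum>n. (-1)^n * of_real (real n + q) powr - w)" if "0 < Re w" for w
    using F_eq[of 1 w] sums_zetaE_euler_1[OF assms(1) that] that by (simp add: sums_iff)
  ultimately have "(\<lambda>z. zetaE z q) = F"
    by (intro zetaE_eqI) auto
  then show ?thesis
    using F_eq[OF assms(2)] by (metis)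
qed

lemma higher_deriv_sum_powr:
  fixes c :: "'a \<Rightarrow> complex"
  assumes "\<And>n. n \<in> S \<Longrightarrow> 0 < t n"
  shows "(deriv ^^ l) (\<lambda>z. \<Sum>n\<in>S. c n * of_real (t n) powr - z) =
           (\<lambda>z. \<Sum>n\<in>S. c n * (- of_real (ln (t n)))^l * of_real (t n) powr - z)"
proof (induction l)
  case (Suc l)
  have powr: "((\<lambda>z::complex. of_real (t n) powr - z) has_field_derivative D) (at z)"
    if "n \<in> S" "D = - of_real (ln (t n)) * of_real (t n) powr - z" for n z D
  proof -
    have "0 < t n"
      using assms that by blast
    then show ?thesis
      unfolding that(2)
      using DERIV_chain2[OF has_field_derivative_powr_right[of "of_real (t n)"] DERIV_minus[OF DERIV_ident]]
      by (simp add: Ln_of_real)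
  qed
  have "deriv (\<lambda>z. \<Sum>n\<in>S. c n * (- of_real (ln (t n)))^l * of_real (t n) powr - z) z =
      (\<Sum>n\<in>S. c n * (- of_real (ln (t n)))^Suc l * of_real (t n) powr - z)" for z
    by (intro DERIV_imp_deriv derivative_eq_intros powr sum.cong refl) (auto simp: algebra_simps)
  with Suc.IH show ?case by auto
qed simp

lemma higher_deriv_alternating_powr_sum:
  assumes "0 < q"
  shows "(-1)^l * (deriv ^^ l) (\<lambda>z::complex. \<Sum>n<N. (-1)^n * of_real (real n + q) powr - z) 1 =
           of_real (\<Sum>n<N. (-1) ^ n * ln (real n + q) ^ l / (real n + q))"
proof -
  have "(deriv ^^ l) (\<lambda>z::complex. \<Sum>n<N. (-1)^n * of_real (real n + q) powr - z) =
      (\<lambda>z. \<Sum>n<N. (-1)^n * (- of_real (ln (real n + q)))^l * of_real (real n + q) powr - z)"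
    using assms by (intro higher_deriv_sum_powr) simp
  then have "(deriv ^^ l) (\<lambda>z::complex. \<Sum>n<N. (-1)^n * of_real (real n + q) powr - z) 1 =
      (-1)^l * of_real (\<Sum>n<N. (-1) ^ n * ln (real n + q) ^ l / (real n + q))"
    using assms by (simp add: sum_distrib_left powr_minus power_minus' divide_inverse mult_ac)
  then show ?thesis
    by (simp flip: mult.assoc power_mult_distrib)
qed

lemma uniform_limit_zetaE_partial_sums:
  assumes "0 < q" "0 < \<sigma>" "\<And>z. z \<in> A \<Longrightarrow> \<sigma> \<le> Re z \<and> norm z \<le> R"
  shows "uniform_limit A (\<lambda>N z. \<Sum>n<N. (-1)^n * of_real (real n + q) powr - z) (\<lambda>z. zetaE z q)
           sequentially"
proof -
  have series: "uniform_limit A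
      (\<lambda>N z. \<Sum>n<N. (-1)^n * diff_powr 1 z (real n + q))
      (\<lambda>z. \<Sum>n. (-1)^n * diff_powr 1 z (real n + q)) sequentially"
    using assms by (intro uniform_limit_diff_powr_series[of q "1 + \<sigma>" A 1 R]) auto
  have boundary:
    "uniform_limit A (\<lambda>N z. (-1)^N * of_real (real N + q) powr - z / 2) (\<lambda>_. 0) sequentially"
  proof (rule uniform_limit_null_comparison)
    show "\<forall>\<^sub>F N in sequentially. \<forall>z\<in>A.
        norm ((-1)^N * of_real (real N + q) powr - z / 2) \<le> (real N + q) powr - \<sigma> / 2"
      using eventually_norm_diff_powr_le[of q \<sigma> A 0 R] assms
      by (auto simp: norm_mult norm_power norm_divide elim!: eventually_mono)
    show "uniform_limit A (\<lambda>N _. (real N + q) powr - \<sigma> / 2) (\<lambda>_. 0) sequentially"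
      using tendsto_divide_zero[OF shifted_powr_tendsto_0[OF assms(2), of q], where c = 2]
      by (simp add: uniform_limit_iff tendsto_iff)
  qed
  have "uniform_limit A
      (\<lambda>N z. of_real q powr - z / 2 + (\<Sum>n<N. (-1)^n * diff_powr 1 z (real n + q)) / 2
              - (-1)^N * of_real (real N + q) powr - z / 2)
      (\<lambda>z. of_real q powr - z / 2 + (\<Sum>n. (-1)^n * diff_powr 1 z (real n + q)) / 2 - 0)
      sequentially"
    by (intro uniform_limit_intros series boundary)
  then show ?thesis
  proof (rule iffD1[OF uniform_limit_cong', rotated -1])
    show "of_real q powr - z / 2 + (\<Sum>n<N. (-1)^n * diff_powr 1 z (real n + q)) / 2
        - (-1)^N * of_real (real N + q) powr - z / 2 = (\<Sum>n<N. (-1)^n * of_real (real n + q) powr - z)"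
      for N and z :: complex
      using sum_alternating_euler_step[where g = "\<lambda>n. complex_of_real (real n + q) powr - z"]
      by (simp add: shift_diff_Suc' add_ac)
    show "of_real q powr - z / 2 + (\<Sum>n. (-1)^n * diff_powr 1 z (real n + q)) / 2 - 0
        = zetaE z q" if "z \<in> A" for z
      using zetaE_eq_zetaE_euler[OF assms(1), of 1 z] assms(3)[OF that] assms(2)
      by (simp add: zetaE_euler_def)
  qed
qed

theorem corollary3p8:
  fixes q :: real and l :: nat
  assumes "0 < q"
  shows "(\<lambda>N. complex_of_real (\<Sum>n\<le>N. (-1) ^ n * ln (real n + q) ^ l / (real n + q)))
           \<longlonglongrightarrow> tilde_gamma l q"
proof -
  define partial where
    "partial N = (\<lambda>z::complex. \<Sum>n<N. (-1)^n * of_real (real n + q) powr - z)" for N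
  have ball: "1/2 \<le> Re z \<and> norm z \<le> 3/2" if "z \<in> ball 1 (1/2)" for z :: complex
  proof -
    have "norm (1 - z) < 1/2"
      using that by (simp add: dist_norm)
    then show ?thesis
      using complex_Re_le_cmod[of "1 - z"] norm_triangle_ineq4[of 1 "1 - z"] by auto
  qed
  have "uniform_limit (ball 1 (1/2)) partial (\<lambda>z. zetaE z q) sequentially"
    unfolding partial_def by (rule uniform_limit_zetaE_partial_sums[OF assms _ ball]) simp
  then have "(\<lambda>N. (deriv ^^ l) (partial N) 1) \<longlonglongrightarrow> (deriv ^^ l) (\<lambda>z. zetaE z q) 1"
    by (rule higher_deriv_complex_uniform_limit)
       (auto simp: partial_def intro!: always_eventually holomorphic_intros)
  then have "(\<lambda>N. (-1)^l * (deriv ^^ l) (partial N) 1) \<longlonglongrightarrow> tilde_gamma l q"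
    unfolding tilde_gamma_def by (rule tendsto_mult_left)
  moreover have "(-1)^l * (deriv ^^ l) (partial N) 1 =
      of_real (\<Sum>n<N. (-1) ^ n * ln (real n + q) ^ l / (real n + q))" for N
    unfolding partial_def using assms by (rule higher_deriv_alternating_powr_sum)
  ultimately have
    "(\<lambda>N. of_real (\<Sum>n<N. (-1) ^ n * ln (real n + q) ^ l / (real n + q))) \<longlonglongrightarrow> tilde_gamma l q"
    by simp
  then have "(\<lambda>N. of_real (\<Sum>n<Suc N. (-1) ^ n * ln (real n + q) ^ l / (real n + q)))
      \<longlonglongrightarrow> tilde_gamma l q"
    by (rule LIMSEQ_Suc)
  then show ?thesis
    by (simp add: lessThan_Suc_atMost)
qed

end
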